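(* Let $k$ be a field, $V$ a finite-dimensional $k$-vector space and $A$ a finite arrangement of linear hyperplanes in $V$ with intersection lattice $L$ and natural sheaf $F$. Then $$\chi_q\,\mathrm{HS}_*(L\setminus\mathbf{0};\Lambda^\bullet F)=-\chi_L(1+q)+(1+q)^{\dim V}.$$
   Context: $L$ consists of all intersections of subsets of $A$ (empty intersection $=V$), ordered by reverse inclusion, minimum $\mathbf{0}=V$. Möbius function: $\mu_L(x,x)=1$, $\mu_L(x,y)=-\sum_{x\le z<y}\mu_L(x,z)$; $\chi_L(t)=\sum_{x\in L}\mu_L(\mathbf{0},x)t^{\dim x}$. A sheaf assigns a vector space $G(x)$ to each element and a linear map $G^y_x:G(y)\to G(x)$ for $x\le y$, functorially. Natural sheaf: $F(x)=x$, $F^y_x$ the inclusion $y\subseteq x$; $(\Lambda^jF)(x)=\Lambda^j(F(x))$, maps $\Lambda^j(F^y_x)$; $\Lambda^\bullet F=\bigoplus_{j\ge0}\Lambda^jF$. Sheaf homology $\mathrm{HS}_*(P;G)$ of a finite poset: homology of $S_n(P;G)=\bigoplus_\sigma G(x_0)$ over chains $\sigma=(x_n\le\cdots\le x_0)$ with $d(s_\sigma)=G^{x_0}_{x_1}(s)_{d_0\sigma}+\sum_{i=1}^n(-1)^is_{d_i\sigma}$; $L\setminus\mathbf{0}$ is $L$ with $V$ removed. Graded Euler characteristic: $\chi_q\,\mathrm{HS}_*(L\setminus\mathbf{0};\Lambda^\bullet F)=\sum_{k\ge0}q^k\sum_n(-1)^n\dim\mathrm{HS}_n(L\setminus\mathbf{0};\Lambda^kF)$.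 *)

theory Defs
  imports Complex_Main "HOL-Library.Function_Algebras" "HOL-Combinatorics.Permutations"
    "HOL-Computational_Algebra.Polynomial"
begin

definition fscale :: "'k::field \<Rightarrow> ('a \<Rightarrow> 'k) \<Rightarrow> ('a \<Rightarrow> 'k)" where
  "fscale c f = (\<lambda>p. c * f p)"

definition fdim :: "('a \<Rightarrow> 'k::field) set \<Rightarrow> nat" where
  "fdim S = vector_space.dim fscale S"

definition fspan :: "('a \<Rightarrow> 'k::field) set \<Rightarrow> ('a \<Rightarrow> 'k) set" where
  "fspan S = module.span fscale S"

text \<open>The n-dimensional coordinate space V = k^n, vectors indexed by 0..n-1.\<close>
definition Vn :: "nat \<Rightarrow> (nat \<Rightarrow> 'k::field) set" where
  "Vn n = {v. \<forall>i\<ge>n. v i = 0}"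

definition is_lin_hyperplane :: "nat \<Rightarrow> (nat \<Rightarrow> 'k::field) set \<Rightarrow> bool" where
  "is_lin_hyperplane n H \<longleftrightarrow>
     (\<exists>a::nat \<Rightarrow> 'k. (\<exists>i<n. a i \<noteq> 0) \<and> H = {v \<in> Vn n. (\<Sum>i<n. a i * v i) = 0})"

definition int_lattice :: "nat \<Rightarrow> (nat \<Rightarrow> 'k::field) set set \<Rightarrow> (nat \<Rightarrow> 'k) set set" where
  "int_lattice n A = {Vn n \<inter> \<Inter>B | B. B \<subseteq> A}"

definition lat_le :: "'a set \<Rightarrow> 'a set \<Rightarrow> bool" where
  "lat_le x y \<longleftrightarrow> y \<subseteq> x"

definition mobius :: "'a set \<Rightarrow> ('a \<Rightarrow> 'a \<Rightarrow> bool) \<Rightarrow> 'a \<Rightarrow> 'a \<Rightarrow> int" where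
  "mobius P le x = (THE f. \<forall>y. f y =
     (if y \<in> P \<and> le x y then
        (if y = x then 1 else - (\<Sum>z\<in>{z\<in>P. le x z \<and> le z y \<and> z \<noteq> y}. f z))
      else 0))"

definition char_poly :: "nat \<Rightarrow> (nat \<Rightarrow> 'k::field) set set \<Rightarrow> int poly" where
  "char_poly n A = (\<Sum>x\<in>int_lattice n A.
      smult (mobius (int_lattice n A) lat_le (Vn n) x) (monom 1 (fdim x)))"

definition det_leibniz :: "nat \<Rightarrow> (nat \<Rightarrow> nat \<Rightarrow> 'k::field) \<Rightarrow> 'k" where
  "det_leibniz j M = (\<Sum>p | p permutes {..<j}. of_int (sign p) * (\<Prod>a<j. M a (p a)))"

text \<open>Wedge v_1 ^ ... ^ v_j in Lambda^j(k^n), coordinates indexed by j-subsets of {0..n-1}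
  (basis e_S = e_{s_1} ^ ... ^ e_{s_j}, s_1 < ... < s_j).\<close>
definition wedge :: "nat \<Rightarrow> (nat \<Rightarrow> 'k::field) list \<Rightarrow> nat set \<Rightarrow> 'k" where
  "wedge n vs = (\<lambda>S. if S \<subseteq> {..<n} \<and> card S = length vs
      then det_leibniz (length vs) (\<lambda>a b. (vs ! a) (sorted_list_of_set S ! b)) else 0)"

text \<open>Lambda^j(W) for a subspace W of k^n, as the subspace of Lambda^j(k^n) spanned by
  wedges of vectors of W; Lambda^j of an inclusion of subspaces is then the inclusion.\<close>
definition ext_pow :: "nat \<Rightarrow> nat \<Rightarrow> (nat \<Rightarrow> 'k::field) set \<Rightarrow> (nat set \<Rightarrow> 'k) set" where
  "ext_pow n j W = fspan {wedge n vs | vs. length vs = j \<and> set vs \<subseteq> W}"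

text \<open>Chains sigma = (x_m < ... < x_0) in P, stored as the list [x_0, x_1, ..., x_m];
  in reverse inclusion order this means x_0 \<subset> x_1 \<subset> ... \<subset> x_m.\<close>
definition chains :: "'a set set \<Rightarrow> nat \<Rightarrow> 'a set list set" where
  "chains P m = {\<sigma>. length \<sigma> = Suc m \<and> set \<sigma> \<subseteq> P \<and> sorted_wrt (\<lambda>a b. a \<subset> b) \<sigma>}"

definition del_nth :: "nat \<Rightarrow> 'a list \<Rightarrow> 'a list" where
  "del_nth i xs = take i xs @ drop (Suc i) xs"

text \<open>S_m(P; Lambda^j F) = direct sum over m-chains sigma of Lambda^j(x_0).\<close>
definition chain_sp :: "nat \<Rightarrow> nat \<Rightarrow> (nat \<Rightarrow> 'k::field) set set \<Rightarrow> nat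
    \<Rightarrow> (((nat \<Rightarrow> 'k) set list \<times> nat set) \<Rightarrow> 'k) set" where
  "chain_sp n j P m = {f. \<forall>\<sigma>. (\<sigma> \<notin> chains P m \<longrightarrow> (\<forall>S. f (\<sigma>, S) = 0)) \<and>
        (\<sigma> \<in> chains P m \<longrightarrow> (\<lambda>S. f (\<sigma>, S)) \<in> ext_pow n j (hd \<sigma>))}"

text \<open>Boundary d: S_m \<rightarrow> S_(m-1), d(s_sigma) = (restriction of s)_(d_0 sigma)
  + sum_{i=1}^m (-1)^i s_(d_i sigma); restriction maps are inclusions here.\<close>
definition bdry :: "(nat \<Rightarrow> 'k::field) set set \<Rightarrow> nat
    \<Rightarrow> (((nat \<Rightarrow> 'k) set list \<times> nat set) \<Rightarrow> 'k)
    \<Rightarrow> (((nat \<Rightarrow> 'k) set list \<times> nat set) \<Rightarrow> 'k)" where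
  "bdry P m f = (\<lambda>(\<tau>, S). \<Sum>\<sigma>\<in>chains P m. \<Sum>i\<le>m.
       if del_nth i \<sigma> = \<tau> then (-1) ^ i * f (\<sigma>, S) else 0)"

definition cycles where
  "cycles n j P m = {f \<in> chain_sp n j P m. m = 0 \<or> bdry P m f = 0}"

definition boundaries where
  "boundaries n j P m = bdry P (Suc m) ` chain_sp n j P (Suc m)"

definition hs_dim :: "nat \<Rightarrow> nat \<Rightarrow> (nat \<Rightarrow> 'k::field) set set \<Rightarrow> nat \<Rightarrow> int" where
  "hs_dim n j P m = int (fdim (cycles n j P m)) - int (fdim (boundaries n j P m))"

text \<open>Euler characteristic sum_m (-1)^m dim HS_m; S_m = 0 for m \<ge> card P.\<close>
definition hs_euler :: "nat \<Rightarrow> nat \<Rightarrow> (nat \<Rightarrow> 'k::field) set set \<Rightarrow> int" where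
  "hs_euler n j P = (\<Sum>m\<le>card P. (-1) ^ m * hs_dim n j P m)"

end

theory Submission
  imports Defs "Jordan_Normal_Form.Determinant"
begin

(* The Euler characteristic of a finite chain complex is the alternating sum of the dimensions
   of its chain spaces, by rank-nullity for each boundary map. The m-th chain space of
   L \ 0 with coefficients in Lambda^j F is the direct sum, over the chains x_m < ... < x_0,
   of Lambda^j(x_0), which has dimension (dim x_0 choose j): the wedges of the j-subsets T of
   a reduced echelon basis of x_0 span it, and they are independent because the coordinate of
   the wedge of T at the pivot columns of T' is +-1 if T = T' and 0 otherwise.
   Grouping the chains by their top element y = x_0, the coefficient of (dim y choose j) is
   the alternating number of chains with top y, which by Philip Hall's theorem is -mu(0, y).
   On the other side, the j-th coefficient of chi_L(1 + q) is the sum of mu(0, x) (dim x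
   choose j) over x in L, and its term x = 0 is the j-th coefficient of (1 + q)^(dim V). *)

section \<open>Linear algebra in spaces of functions\<close>

lemma vector_space_fscale: "vector_space (fscale :: 'k::field \<Rightarrow> ('a \<Rightarrow> 'k) \<Rightarrow> ('a \<Rightarrow> 'k))"
  by unfold_locales (auto simp: fscale_def fun_eq_iff algebra_simps)

interpretation fs: vector_space "fscale :: 'k::field \<Rightarrow> ('a \<Rightarrow> 'k) \<Rightarrow> ('a \<Rightarrow> 'k)"
  by (rule vector_space_fscale)

lemma fdim_eq_fs_dim: "fdim = fs.dim"
  by (simp add: fdim_def fun_eq_iff)

lemma fspan_eq_fs_span: "fspan = fs.span"
  by (simp add: fspan_def fun_eq_iff)

lemma sum_fun_apply: "(sum g A) x = (\<Sum>a\<in>A. g a x)"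
  by (induction A rule: infinite_finite_induct) auto

lemma linear_fscaleI:
  assumes "\<And>x y. f (x + y) = f x + f y" and "\<And>c x. f (fscale c x) = fscale c (f x)"
  shows "Vector_Spaces.linear fscale fscale f"
  unfolding Vector_Spaces.linear_iff by (intro conjI vector_space_fscale allI assms)

lemma fs_dim_zero: "fs.dim {0} = 0"
  by (rule fs.dim_unique[of "{}"]) (use fs.independent_empty in auto)

definition fin_dim :: "('a \<Rightarrow> 'k::field) set \<Rightarrow> bool" where
  "fin_dim X \<longleftrightarrow> (\<exists>F. finite F \<and> X \<subseteq> fs.span F)"

lemma span_disjoint_independent_eq_0:
  assumes "fs.independent B" "finite B" "X \<subseteq> B" "Y \<subseteq> B" "X \<inter> Y = {}"
    and "z \<in> fs.span X" "z \<in> fs.span Y"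
  shows "z = 0"
proof -
  have fin: "finite X" "finite Y" using assms(2-4) finite_subset by auto
  obtain u where u: "z = (\<Sum>v\<in>X. fscale (u v) v)" using assms(6) fs.span_finite[OF fin(1)] by auto
  obtain w where w: "z = (\<Sum>v\<in>Y. fscale (w v) v)" using assms(7) fs.span_finite[OF fin(2)] by auto
  define c where "c v = (if v \<in> X then u v else - w v)" for v
  have "(\<Sum>v\<in>X \<union> Y. fscale (c v) v) = (\<Sum>v\<in>X. fscale (c v) v) + (\<Sum>v\<in>Y. fscale (c v) v)"
    by (rule sum.union_disjoint) (use fin assms(5) in auto)
  also have "(\<Sum>v\<in>X. fscale (c v) v) = z"
    unfolding u c_def by (rule sum.cong) auto
  also have "(\<Sum>v\<in>Y. fscale (c v) v) = - z"
    using assms(5) unfolding w c_def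
    by (auto simp: fscale_def fun_eq_iff sum_fun_apply sum_negf[symmetric] intro!: sum.cong)
  finally have "(\<Sum>v\<in>X \<union> Y. fscale (c v) v) = 0" by (simp only: add.right_inverse)
  then have "c v = 0" if "v \<in> X" for v
    using fs.independentD[OF assms(1) _ _ _ that[THEN UnI1]] fin assms(3,4) by blast
  then show ?thesis unfolding u by (auto simp: c_def fscale_def fun_eq_iff sum_fun_apply)
qed

lemma dim_image_eq_card_basis_diff:
  fixes f :: "('a \<Rightarrow> 'k::field) \<Rightarrow> ('b \<Rightarrow> 'k)"
  assumes lin: "Vector_Spaces.linear fscale fscale f" and S: "fs.subspace S"
    and B: "B \<subseteq> S" "fs.independent B" "S \<subseteq> fs.span B" "finite B"
    and BK: "BK \<subseteq> B" and kernel: "\<And>x. x \<in> S \<Longrightarrow> f x = 0 \<longleftrightarrow> x \<in> fs.span BK"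
  shows "fs.dim (f ` S) = card (B - BK)"
proof -
  interpret f: Vector_Spaces.linear fscale fscale f by (rule lin)
  define C where "C = B - BK"
  have "inj_on f (fs.span C)"
    unfolding f.inj_on_iff_eq_0[OF fs.subspace_span]
  proof (intro ballI impI)
    fix x assume x: "x \<in> fs.span C" "f x = 0"
    have "fs.span C \<subseteq> S" using fs.span_minimal[OF _ S] B(1) C_def by blast
    with x have "x \<in> fs.span BK" using kernel by blast
    then show "x = 0"
      using span_disjoint_independent_eq_0[OF B(2,4) BK, of C] x(1) C_def by blast
  qed
  then have indep: "fs.independent (f ` C)" and card: "card (f ` C) = card C"
    using f.independent_injective_image fs.independent_mono[OF B(2)] C_def
    by (auto intro!: card_image inj_on_subset[OF _ fs.span_superset])
  have "f ` S \<subseteq> fs.span (f ` C)"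
  proof
    fix y assume "y \<in> f ` S"
    then obtain x where x: "x \<in> S" "y = f x" by auto
    have "x \<in> fs.span (BK \<union> C)" using B(3) BK x(1) C_def by (auto simp: Un_absorb1)
    then obtain a c where ac: "x = a + c" "a \<in> fs.span BK" "c \<in> fs.span C"
      unfolding fs.span_Un by auto
    have "a \<in> S" using ac(2) fs.span_minimal[OF _ S] BK B(1) by blast
    then have "f a = 0" using kernel ac(2) by blast
    then show "y \<in> fs.span (f ` C)" using x ac f.span_image by (auto simp: f.add)
  qed
  moreover have "f ` C \<subseteq> f ` S" using B(1) C_def by auto
  ultimately show ?thesis
    using fs.dim_unique[OF _ _ indep refl] card unfolding C_def by metis
qed

lemma rank_nullity:
  fixes f :: "('a \<Rightarrow> 'k::field) \<Rightarrow> ('b \<Rightarrow> 'k)"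
  assumes lin: "Vector_Spaces.linear fscale fscale f" and S: "fs.subspace S" and "fin_dim S"
  shows "fs.dim S = fs.dim {x\<in>S. f x = 0} + fs.dim (f ` S)"
proof -
  interpret f: Vector_Spaces.linear fscale fscale f by (rule lin)
  define K where "K = {x\<in>S. f x = 0}"
  have K: "fs.subspace K"
    using fs.subspace_inter[OF S f.subspace_kernel] unfolding K_def Int_def by simp
  obtain BK where BK: "BK \<subseteq> K" "fs.independent BK" "K \<subseteq> fs.span BK"
    by (rule fs.maximal_independent_subset)
  obtain B where B: "BK \<subseteq> B" "B \<subseteq> S" "fs.independent B" "S \<subseteq> fs.span B"
    using fs.maximal_independent_subset_extend[of BK S] BK K_def by auto
  obtain F where "finite F" "S \<subseteq> fs.span F" using \<open>fin_dim S\<close> unfolding fin_dim_def by blast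
  then have "finite B" using fs.independent_span_bound B by blast
  have "f x = 0 \<longleftrightarrow> x \<in> fs.span BK" if "x \<in> S" for x
    using that BK(3) fs.span_minimal[OF BK(1) K] unfolding K_def by blast
  then have "fs.dim (f ` S) = card (B - BK)"
    by (rule dim_image_eq_card_basis_diff[OF lin S B(2,3,4) \<open>finite B\<close> B(1)])
  moreover have "fs.dim S = card B" using fs.basis_card_eq_dim[OF B(2,4,3)] by simp
  moreover have "fs.dim K = card BK" using fs.basis_card_eq_dim[OF BK(1,3,2)] by simp
  moreover have "card B = card BK + card (B - BK)"
    using card_Diff_subset[OF finite_subset[OF B(1) \<open>finite B\<close>] B(1)] card_mono[OF \<open>finite B\<close> B(1)]
    by simp
  ultimately show ?thesis unfolding K_def by simp
qed

lemma dim_inj_image: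
  fixes f :: "('a \<Rightarrow> 'k::field) \<Rightarrow> ('b \<Rightarrow> 'k)"
  assumes "Vector_Spaces.linear fscale fscale f" "fs.subspace S" "fin_dim S"
    and "\<And>x. x \<in> S \<Longrightarrow> f x = 0 \<Longrightarrow> x = 0"
  shows "fs.dim (f ` S) = fs.dim S"
proof -
  interpret f: Vector_Spaces.linear fscale fscale f by fact
  have "{x\<in>S. f x = 0} = {0}"
    using assms(4) fs.subspace_0[OF assms(2)] f.zero by auto
  then show ?thesis using rank_nullity[OF assms(1-3)] fs_dim_zero by simp
qed

definition direct_sum :: "'i set \<Rightarrow> ('i \<Rightarrow> ('b \<Rightarrow> 'k::field) set) \<Rightarrow> ('i \<times> 'b \<Rightarrow> 'k) set" where
  "direct_sum I U =
     {f. \<forall>i. (i \<notin> I \<longrightarrow> (\<forall>s. f (i, s) = 0)) \<and> (i \<in> I \<longrightarrow> (\<lambda>s. f (i, s)) \<in> U i)}"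

lemma direct_sum_subspace:
  fixes U :: "'i \<Rightarrow> ('b \<Rightarrow> 'k::field) set"
  assumes "\<And>i. i \<in> I \<Longrightarrow> fs.subspace (U i)"
  shows "fs.subspace (direct_sum I U)"
proof -
  have slice: "(\<lambda>s. (x + y) (i, s)) = (\<lambda>s. x (i, s)) + (\<lambda>s. y (i, s))"
    "(\<lambda>s. fscale c x (i, s)) = fscale c (\<lambda>s. x (i, s))" for x y :: "'i \<times> 'b \<Rightarrow> 'k" and c i
    by (simp_all add: fun_eq_iff fscale_def)
  show ?thesis
    unfolding fs.subspace_def
  proof (intro conjI ballI allI)
    show "0 \<in> direct_sum I U"
      using fs.subspace_0[OF assms] by (auto simp: direct_sum_def zero_fun_def)
  next
    fix x y assume x: "x \<in> direct_sum I U" and y: "y \<in> direct_sum I U"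
    have "(\<lambda>s. (x + y) (i, s)) \<in> U i" if "i \<in> I" for i
      unfolding slice(1) using x y that fs.subspace_add[OF assms[OF that]]
      by (simp add: direct_sum_def)
    then show "x + y \<in> direct_sum I U" using x y by (simp add: direct_sum_def)
  next
    fix c x assume x: "x \<in> direct_sum I U"
    have "(\<lambda>s. fscale c x (i, s)) \<in> U i" if "i \<in> I" for i
      unfolding slice(2) using x that fs.subspace_scale[OF assms[OF that]]
      by (simp add: direct_sum_def)
    then show "fscale c x \<in> direct_sum I U" using x by (simp add: direct_sum_def fscale_def)
  qed
qed

definition embed_summand :: "'i \<Rightarrow> ('b \<Rightarrow> 'k::field) \<Rightarrow> ('i \<times> 'b \<Rightarrow> 'k)" where
  "embed_summand i u = (\<lambda>(\<tau>, s). if \<tau> = i then u s else 0)"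

lemma linear_embed_summand: "Vector_Spaces.linear fscale fscale (embed_summand i)"
  by (auto intro!: linear_fscaleI simp: embed_summand_def fun_eq_iff fscale_def)

lemma fin_dim_direct_sum:
  fixes U :: "'i \<Rightarrow> ('b \<Rightarrow> 'k::field) set"
  assumes "finite I" "\<And>i. i \<in> I \<Longrightarrow> fin_dim (U i)"
  shows "fin_dim (direct_sum I U)"
proof -
  have "\<forall>i\<in>I. \<exists>F. finite F \<and> U i \<subseteq> fs.span F"
    using assms(2) unfolding fin_dim_def by blast
  then obtain F where F: "\<And>i. i \<in> I \<Longrightarrow> finite (F i) \<and> U i \<subseteq> fs.span (F i)"
    by (metis bchoice)
  define G where "G = (\<Union>i\<in>I. embed_summand i ` F i)"
  have "x \<in> fs.span G" if x: "x \<in> direct_sum I U" for x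
  proof -
    have "x p = (\<Sum>i\<in>I. embed_summand i (\<lambda>s. x (i, s))) p" for p
      using x assms(1)
      by (cases p, cases "fst p \<in> I") (simp_all add: sum_fun_apply embed_summand_def direct_sum_def)
    then have eq: "x = (\<Sum>i\<in>I. embed_summand i (\<lambda>s. x (i, s)))" by (rule ext)
    have summand: "embed_summand i (\<lambda>s. x (i, s)) \<in> fs.span G" if "i \<in> I" for i
    proof -
      interpret e: Vector_Spaces.linear fscale fscale "embed_summand i"
        by (rule linear_embed_summand)
      have "(\<lambda>s. x (i, s)) \<in> U i" using x that unfolding direct_sum_def by simp
      then have "(\<lambda>s. x (i, s)) \<in> fs.span (F i)" using F that by blast
      then have "embed_summand i (\<lambda>s. x (i, s)) \<in> embed_summand i ` fs.span (F i)" by blast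
      also have "\<dots> \<subseteq> fs.span G"
        unfolding e.span_image[symmetric] G_def using that by (intro fs.span_mono) auto
      finally show ?thesis .
    qed
    show ?thesis by (subst eq) (intro fs.span_sum summand)
  qed
  moreover have "finite G" using F assms(1) by (auto simp: G_def)
  ultimately show ?thesis unfolding fin_dim_def by blast
qed

definition remove_summand :: "'i \<Rightarrow> ('i \<times> 'b \<Rightarrow> 'k::field) \<Rightarrow> ('i \<times> 'b \<Rightarrow> 'k)" where
  "remove_summand i x = (\<lambda>(\<tau>, s). if \<tau> = i then 0 else x (\<tau>, s))"

lemma linear_remove_summand: "Vector_Spaces.linear fscale fscale (remove_summand i)"
  by (auto intro!: linear_fscaleI simp: remove_summand_def fun_eq_iff fscale_def)

lemma remove_summand_image:
  assumes "i \<notin> I" "0 \<in> U i"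
  shows "remove_summand i ` direct_sum (insert i I) U = direct_sum I U"
proof (intro equalityI subsetI)
  fix y assume "y \<in> remove_summand i ` direct_sum (insert i I) U"
  then obtain x where x: "x \<in> direct_sum (insert i I) U" and y: "y = remove_summand i x" by blast
  have "(\<lambda>s. y (\<tau>, s)) \<in> U \<tau>" if "\<tau> \<in> I" for \<tau>
  proof -
    have "\<tau> \<noteq> i" using that assms(1) by auto
    then show ?thesis using x that unfolding y remove_summand_def direct_sum_def by simp
  qed
  moreover have "y (\<tau>, s) = 0" if "\<tau> \<notin> I" for \<tau> s
    using x that unfolding y remove_summand_def direct_sum_def by auto
  ultimately show "y \<in> direct_sum I U" unfolding direct_sum_def by blast
next
  fix y assume y: "y \<in> direct_sum I U"
  then have yi: "(\<lambda>s. y (i, s)) = 0"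
    using assms(1) by (auto simp: direct_sum_def fun_eq_iff)
  then have "y \<in> direct_sum (insert i I) U" using y assms(2) unfolding direct_sum_def by auto
  moreover have "remove_summand i y = y" using yi by (auto simp: remove_summand_def fun_eq_iff)
  ultimately show "y \<in> remove_summand i ` direct_sum (insert i I) U" by force
qed

lemma remove_summand_kernel:
  assumes "i \<notin> I" "\<And>\<tau>. \<tau> \<in> I \<Longrightarrow> 0 \<in> U \<tau>"
  shows "{x \<in> direct_sum (insert i I) U. remove_summand i x = 0} = embed_summand i ` U i"
proof (intro equalityI subsetI)
  fix x assume x: "x \<in> {x \<in> direct_sum (insert i I) U. remove_summand i x = 0}"
  then have "x = embed_summand i (\<lambda>s. x (i, s))"
    by (auto simp: remove_summand_def embed_summand_def fun_eq_iff split: if_splits)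
  moreover have "(\<lambda>s. x (i, s)) \<in> U i" using x by (auto simp: direct_sum_def)
  ultimately show "x \<in> embed_summand i ` U i" by blast
next
  fix x assume "x \<in> embed_summand i ` U i"
  then obtain u where u: "u \<in> U i" "x = embed_summand i u" by auto
  have "(\<lambda>s. x (\<tau>, s)) \<in> U \<tau>" if "\<tau> \<in> I" for \<tau>
  proof -
    have "\<tau> \<noteq> i" using that assms(1) by auto
    then show ?thesis using u assms(2)[OF that] by (simp add: embed_summand_def zero_fun_def)
  qed
  then show "x \<in> {x \<in> direct_sum (insert i I) U. remove_summand i x = 0}"
    using u by (auto simp: direct_sum_def embed_summand_def remove_summand_def fun_eq_iff)
qed

lemma dim_embed_summand:
  assumes "fs.subspace U" "fin_dim U"
  shows "fs.dim (embed_summand i ` U) = fs.dim U"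
proof (rule dim_inj_image[OF linear_embed_summand assms])
  fix u assume "embed_summand i u = 0"
  then have "embed_summand i u (i, s) = 0" for s by simp
  then show "u = 0" by (simp add: embed_summand_def fun_eq_iff)
qed

lemma dim_direct_sum:
  fixes U :: "'i \<Rightarrow> ('b \<Rightarrow> 'k::field) set"
  assumes "finite I" "\<And>i. i \<in> I \<Longrightarrow> fs.subspace (U i)" "\<And>i. i \<in> I \<Longrightarrow> fin_dim (U i)"
  shows "fs.dim (direct_sum I U) = (\<Sum>i\<in>I. fs.dim (U i))"
  using assms
proof (induction I rule: finite_induct)
  case empty
  have "direct_sum {} U = {0}" by (auto simp: direct_sum_def fun_eq_iff)
  then show ?case using fs_dim_zero by simp
next
  case (insert i I)
  let ?S = "direct_sum (insert i I) U"
  have zero: "0 \<in> U \<tau>" if "\<tau> \<in> insert i I" for \<tau>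
    using fs.subspace_0[OF insert.prems(1)[OF that]] .
  have "fs.dim ?S = fs.dim {x \<in> ?S. remove_summand i x = 0} + fs.dim (remove_summand i ` ?S)"
    using insert.hyps insert.prems
    by (intro rank_nullity[OF linear_remove_summand] direct_sum_subspace fin_dim_direct_sum) auto
  also have "{x \<in> ?S. remove_summand i x = 0} = embed_summand i ` U i"
    using zero by (intro remove_summand_kernel[OF insert.hyps(2)]) auto
  finally have "fs.dim ?S = fs.dim (embed_summand i ` U i) + fs.dim (remove_summand i ` ?S)" .
  moreover have "fs.dim (embed_summand i ` U i) = fs.dim (U i)"
    using insert.prems by (intro dim_embed_summand) auto
  ultimately show ?case
    using remove_summand_image[of i I U] zero[of i] insert by simp
qed

section \<open>Leibniz determinants and wedge products\<close>

lemma permutes_lessThan_lt: "p permutes {..<j} \<Longrightarrow> a < j \<Longrightarrow> p a < j"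
  using permutes_in_image[of p "{..<j}" a] by simp

lemma det_leibniz_cong:
  assumes "\<And>a b. a < j \<Longrightarrow> b < j \<Longrightarrow> M a b = N a b"
  shows "det_leibniz j M = det_leibniz j N"
  unfolding det_leibniz_def
  by (intro sum.cong arg_cong[where f="\<lambda>x. _ * x"] prod.cong refl)
     (auto simp: assms permutes_lessThan_lt)

lemma det_leibniz_eq_det: "det_leibniz j M = Determinant.det (mat j j (\<lambda>(a, b). M a b))"
  unfolding Determinant.det_def det_leibniz_def atLeast0LessThan
  by (auto intro!: sum.cong arg_cong[where f="\<lambda>x. _ * x"] prod.cong simp: permutes_lessThan_lt)

lemma det_leibniz_permute_rows:
  assumes "\<pi> permutes {..<j}"
  shows "det_leibniz j (\<lambda>a b. M (\<pi> a) b) = of_int (sign \<pi>) * det_leibniz j M"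
proof -
  have "mat j j (\<lambda>(a, b). M (\<pi> a) b) = mat j j (\<lambda>(a, b). mat j j (\<lambda>(a, b). M a b) $$ (\<pi> a, b))"
    by (rule eq_matI) (auto simp: permutes_lessThan_lt[OF assms])
  then show ?thesis
    using det_permute_rows[OF mat_carrier, of \<pi> j "\<lambda>(a, b). M a b"] assms
    by (simp add: det_leibniz_eq_det atLeast0LessThan)
qed

lemma det_leibniz_identical_rows:
  assumes "a < j" "a' < j" "a \<noteq> a'" "\<And>b. b < j \<Longrightarrow> M a b = M a' b"
  shows "det_leibniz j M = 0"
  unfolding det_leibniz_eq_det
  by (rule det_identical_rows[OF mat_carrier assms(3,1,2)]) (auto simp: assms intro!: eq_vecI)

lemma det_leibniz_zero_row:
  assumes "a < j" "\<And>b. b < j \<Longrightarrow> M a b = 0"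
  shows "det_leibniz j M = 0"
  unfolding det_leibniz_def
proof (intro sum.neutral ballI)
  fix p assume "p \<in> {p. p permutes {..<j}}"
  then have "M a (p a) = 0" using assms permutes_lessThan_lt by auto
  then show "of_int (sign p) * (\<Prod>a<j. M a (p a)) = 0" using assms(1) by (auto intro: prod_zero)
qed

lemma det_leibniz_one: "det_leibniz j (\<lambda>a b. if a = b then 1 else 0) = (1::'k::field)"
proof -
  have "mat j j (\<lambda>(a, b). if a = b then 1 else 0) = (1\<^sub>m j :: 'k mat)" by (rule eq_matI) auto
  then show ?thesis unfolding det_leibniz_eq_det by simp
qed

lemma det_leibniz_linear_row:
  assumes "k < j"
  shows "det_leibniz j (\<lambda>a b. if a = k then c * x b + y b else M a b) =
    c * det_leibniz j (\<lambda>a b. if a = k then x b else M a b) +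
    det_leibniz j (\<lambda>a b. if a = k then y b else M a b)"
  unfolding det_leibniz_def prod.delta_remove[OF finite_lessThan]
  using assms by (simp add: sum_distrib_left sum.distrib[symmetric] algebra_simps)

lemma det_leibniz_permutation_matrix:
  assumes "\<pi> permutes {..<j}"
  shows "det_leibniz j (\<lambda>a b. if \<pi> a = b then 1 else 0) = (of_int (sign \<pi>) :: 'k::field)"
  using det_leibniz_permute_rows[OF assms, of "\<lambda>a b. if a = b then (1::'k) else 0"]
  by (simp add: det_leibniz_one)

lemma of_int_sign_neq_0: "(of_int (sign \<pi>) :: 'k::field) \<noteq> 0"
  by (cases \<pi> rule: sign_cases) auto

lemma linear_wedge_slot: "Vector_Spaces.linear fscale fscale (\<lambda>x. wedge n (us @ x # vs))"
proof -
  let ?k = "length us" and ?j = "length (us @ 0 # vs)"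
  have row: "(\<lambda>a b. ((us @ x # vs) ! a) (s ! b)) =
      (\<lambda>a b. if a = ?k then x (s ! b) else ((us @ 0 # vs) ! a) (s ! b))" for x s
    by (auto simp: fun_eq_iff nth_append nth_Cons split: nat.split)
  have k: "?k < ?j" by simp
  show ?thesis
  proof (rule linear_fscaleI; rule ext)
    fix x y and S :: "nat set"
    let ?s = "sorted_list_of_set S"
    let ?M = "\<lambda>a b. ((us @ 0 # vs) ! a) (?s ! b)"
    show "wedge n (us @ (x + y) # vs) S = (wedge n (us @ x # vs) + wedge n (us @ y # vs)) S"
      unfolding wedge_def row
      using det_leibniz_linear_row[OF k, of 1 "\<lambda>b. x (?s ! b)" "\<lambda>b. y (?s ! b)" ?M]
      by (simp cong: if_cong)
  next
    fix c x and S :: "nat set"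
    let ?M = "\<lambda>a b. ((us @ 0 # vs) ! a) (sorted_list_of_set S ! b)"
    have "det_leibniz ?j (\<lambda>a b. if a = ?k then 0 else ?M a b) = 0"
      by (rule det_leibniz_zero_row[OF k]) simp
    then show "wedge n (us @ fscale c x # vs) S = fscale c (wedge n (us @ x # vs)) S"
      unfolding wedge_def row
      using det_leibniz_linear_row[OF k, of c "\<lambda>b. x (sorted_list_of_set S ! b)" "\<lambda>_. 0" ?M]
      by (simp add: fscale_def cong: if_cong)
  qed
qed

lemma wedge_permute:
  assumes "\<pi> permutes {..<length vs}"
  shows "wedge n (permute_list \<pi> vs) = fscale (of_int (sign \<pi>)) (wedge n vs)"
proof (rule ext)
  fix S :: "nat set"
  let ?s = "sorted_list_of_set S"
  have "det_leibniz (length vs) (\<lambda>a b. (permute_list \<pi> vs ! a) (?s ! b)) =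
      of_int (sign \<pi>) * det_leibniz (length vs) (\<lambda>a b. (vs ! a) (?s ! b))"
    unfolding det_leibniz_permute_rows[OF assms, symmetric]
    by (rule det_leibniz_cong) (simp add: permute_list_nth[OF assms])
  then show "wedge n (permute_list \<pi> vs) S = fscale (of_int (sign \<pi>)) (wedge n vs) S"
    by (simp add: wedge_def fscale_def)
qed

lemma wedge_not_distinct:
  assumes "\<not> distinct vs"
  shows "wedge n vs = 0"
proof (rule ext)
  fix S
  obtain a a' where "a < length vs" "a' < length vs" "a \<noteq> a'" "vs ! a = vs ! a'"
    using assms by (auto simp: distinct_conv_nth)
  then show "wedge n vs S = 0 S"
    unfolding wedge_def
    using det_leibniz_identical_rows[of a _ a' "\<lambda>a b. (vs ! a) (sorted_list_of_set S ! b)"] by simp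
qed

lemma wedge_in_span_wedges:
  assumes "set vs \<subseteq> fs.span X"
  shows "wedge n vs \<in> fs.span {wedge n ws | ws. length ws = length vs \<and> set ws \<subseteq> X}"
proof -
  have "wedge n (us @ vs) \<in> fs.span {wedge n ws | ws. length ws = length (us @ vs) \<and> set ws \<subseteq> X}"
    if "set us \<subseteq> X" "set vs \<subseteq> fs.span X" for us
    using that
  proof (induction vs arbitrary: us)
    case Nil
    then show ?case by (intro fs.span_base) auto
  next
    case (Cons v vs)
    let ?G = "{wedge n ws | ws. length ws = length (us @ v # vs) \<and> set ws \<subseteq> X}"
    let ?W = "(\<lambda>x. wedge n (us @ x # vs)) -` fs.span ?G"
    interpret w: Vector_Spaces.linear fscale fscale "\<lambda>x. wedge n (us @ x # vs)"
      by (rule linear_wedge_slot)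
    have "X \<subseteq> ?W"
    proof
      fix x assume "x \<in> X"
      then show "x \<in> ?W" using Cons.IH[of "us @ [x]"] Cons.prems by simp
    qed
    then have "fs.span X \<subseteq> ?W" by (rule fs.span_minimal[OF _ w.subspace_vimage[OF fs.subspace_span]])
    then show ?case using Cons.prems by auto
  qed
  from this[of "[]"] assms show ?thesis by simp
qed

lemma wedge_in_span_sorted_wedges:
  assumes inj: "inj_on b {..<d}" and ws: "set ws \<subseteq> b ` {..<d}"
  shows "wedge n ws \<in> fs.span ((\<lambda>T. wedge n (map b (sorted_list_of_set T))) `
           {T. T \<subseteq> {..<d} \<and> card T = length ws})"
    (is "_ \<in> fs.span (?w ` ?Ts)")
proof (cases "distinct ws")
  case False
  then show ?thesis by (simp add: wedge_not_distinct fs.span_zero)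
next
  case True
  define cs where "cs = map (the_inv_into {..<d} b) ws"
  have ws_cs: "ws = map b cs" unfolding cs_def
    by (rule nth_equalityI) (use ws f_the_inv_into_f[OF inj] in \<open>auto simp: subset_iff\<close>)
  have "set cs \<subseteq> {..<d}" unfolding cs_def using ws the_inv_into_into[OF inj] by auto
  moreover have "distinct cs" using True ws_cs by (simp add: distinct_map)
  ultimately have cs: "set cs \<subseteq> {..<d}" "distinct cs" by auto
  define t where "t = sorted_list_of_set (set cs)"
  have "mset cs = mset t"
    using set_eq_iff_mset_eq_distinct[OF cs(2), of t] by (simp add: t_def)
  then obtain \<pi> where \<pi>: "\<pi> permutes {..<length t}" "permute_list \<pi> t = cs"
    by (rule mset_eq_permutation)
  then have "ws = permute_list \<pi> (map b t)" using ws_cs \<pi>(2) by (simp add: permute_list_map[OF \<pi>(1)])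
  then have "wedge n ws = fscale (of_int (sign \<pi>)) (?w (set cs))"
    using wedge_permute[of \<pi> "map b t" n] \<pi>(1) by (simp add: t_def)
  moreover have "set cs \<in> ?Ts" using cs distinct_card[OF cs(2)] ws_cs by auto
  ultimately show ?thesis by (auto intro: fs.span_scale fs.span_base)
qed

section \<open>The dimension of exterior powers\<close>

lemma Vn_subspace: "fs.subspace (Vn n :: (nat \<Rightarrow> 'k::field) set)"
  unfolding fs.subspace_def Vn_def by (auto simp: fscale_def)

lemma fin_dim_Vn: "fin_dim (Vn n :: (nat \<Rightarrow> 'k::field) set)"
proof -
  define e :: "nat \<Rightarrow> nat \<Rightarrow> 'k" where "e i = (\<lambda>k. if i = k then 1 else 0)" for i
  have expand: "v = (\<Sum>i<n. fscale (v i) (e i))" if "v \<in> Vn n" for v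
  proof
    fix k
    show "v k = (\<Sum>i<n. fscale (v i) (e i)) k"
      using that
      by (cases "k < n") (simp_all add: sum_fun_apply fscale_def e_def Vn_def if_distrib cong: if_cong)
  qed
  have "Vn n \<subseteq> fs.span (e ` {..<n})"
  proof
    fix v :: "nat \<Rightarrow> 'k" assume "v \<in> Vn n"
    show "v \<in> fs.span (e ` {..<n})"
      by (subst expand[OF \<open>v \<in> Vn n\<close>]) (intro fs.span_sum fs.span_scale fs.span_base; simp)
  qed
  then show ?thesis unfolding fin_dim_def by blast
qed

text \<open>The rows b 0, ..., b (d - 1) of a matrix in reduced row echelon form, with
  pivot columns p 0, ..., p (d - 1).\<close>
definition reduced_pivots :: "nat \<Rightarrow> (nat \<Rightarrow> nat \<Rightarrow> 'k::field) \<Rightarrow> (nat \<Rightarrow> nat) \<Rightarrow> bool" where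
  "reduced_pivots d b p \<longleftrightarrow> (\<forall>c<d. \<forall>c'<d. b c (p c') = (if c = c' then 1 else 0))"

lemma reduced_pivots_sum_eval:
  assumes "reduced_pivots d b p" "c' < d"
  shows "(\<Sum>c<d. fscale (f c) (b c)) (p c') = f c'"
proof -
  have "(\<Sum>c<d. fscale (f c) (b c)) (p c') = (\<Sum>c<d. f c * (if c = c' then 1 else 0))"
    using assms unfolding reduced_pivots_def by (auto simp: sum_fun_apply fscale_def intro!: sum.cong)
  also have "\<dots> = f c'" using assms(2) by (simp add: if_distrib cong: if_cong)
  finally show ?thesis .
qed

lemma reduced_pivots_inj:
  assumes "reduced_pivots d b p"
  shows "inj_on p {..<d}" and "inj_on b {..<d}"
  using assms unfolding reduced_pivots_def inj_on_def by (metis lessThan_iff zero_neq_one)+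

lemma reduced_pivots_independent:
  assumes "reduced_pivots d b p"
  shows "fs.independent (b ` {..<d})"
proof (rule fs.independent_if_scalars_zero)
  fix f x assume 0: "(\<Sum>x\<in>b ` {..<d}. fscale (f x) x) = 0" and "x \<in> b ` {..<d}"
  then obtain c where c: "c < d" "x = b c" by auto
  have "(\<Sum>c<d. fscale (f (b c)) (b c)) = (\<Sum>x\<in>b ` {..<d}. fscale (f x) x)"
    using sum.reindex[OF reduced_pivots_inj(2)[OF assms], of "\<lambda>x. fscale (f x) x"] by simp
  then have "(\<Sum>c<d. fscale (f (b c)) (b c)) = 0" using 0 by simp
  then show "f x = 0" using reduced_pivots_sum_eval[OF assms c(1), of "\<lambda>c. f (b c)"] c by simp
qed simp

lemma
  assumes piv: "reduced_pivots d b p" and u: "u q = 1" "\<forall>c<d. u (p c) = 0"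
  defines "b' \<equiv> \<lambda>c. if c = d then u else b c - fscale (b c q) u"
  shows reduced_pivots_extend: "reduced_pivots (Suc d) b' (p(d := q))"
    and span_reduced_pivots_extend: "fs.span (b' ` {..<Suc d}) = fs.span (insert u (b ` {..<d}))"
proof -
  show "reduced_pivots (Suc d) b' (p(d := q))"
    using piv u unfolding reduced_pivots_def b'_def by (auto simp: fscale_def less_Suc_eq)
  have "b c \<in> fs.span (b' ` {..<Suc d})" if "c < d" for c
  proof -
    have "b' c \<in> fs.span (b' ` {..<Suc d})" "b' d \<in> fs.span (b' ` {..<Suc d})"
      using that by (auto intro: fs.span_base)
    moreover have "b c = b' c + fscale (b c q) (b' d)" using that by (simp add: b'_def)
    ultimately show ?thesis by (metis fs.span_add fs.span_scale)
  qed
  then have "b ` {..<d} \<subseteq> fs.span (b' ` {..<Suc d})" by auto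
  moreover have "u \<in> fs.span (b' ` {..<Suc d})"
    by (rule fs.span_base) (auto simp: b'_def intro!: image_eqI[of _ _ d])
  moreover have "b' c \<in> fs.span (insert u (b ` {..<d}))" if "c < Suc d" for c
  proof -
    have "u \<in> fs.span (insert u (b ` {..<d}))" "c < d \<Longrightarrow> b c \<in> fs.span (insert u (b ` {..<d}))"
      by (auto intro: fs.span_base)
    then show ?thesis using that by (auto simp: b'_def less_Suc_eq intro: fs.span_diff fs.span_scale)
  qed
  ultimately show "fs.span (b' ` {..<Suc d}) = fs.span (insert u (b ` {..<d}))"
    unfolding fs.span_eq by auto
qed

lemma span_insert_cong: "fs.span S = fs.span T \<Longrightarrow> fs.span (insert a S) = fs.span (insert a T)"
  unfolding fs.span_insert by simp

lemma span_insert_rescale: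
  assumes "w \<in> fs.span B" "c \<noteq> 0"
  shows "fs.span (insert (fscale c (v - w)) B) = fs.span (insert v B)"
proof -
  have w: "w \<in> fs.span (insert x B)" for x
    using assms(1) fs.span_mono[of B "insert x B"] by blast
  have "fscale c (v - w) \<in> fs.span (insert v B)"
    using w[of v] by (intro fs.span_scale fs.span_diff) (simp_all add: fs.span_base)
  moreover have "v = fscale (inverse c) (fscale c (v - w)) + w"
    using assms(2) by (simp add: fscale_def fun_eq_iff field_simps)
  then have "v \<in> fs.span (insert (fscale c (v - w)) B)"
    using w by (metis fs.span_add fs.span_base fs.span_scale insertI1)
  ultimately show ?thesis
    unfolding fs.span_eq by (auto intro: fs.span_base)
qed

text \<open>One step of Gauss--Jordan elimination.\<close>
lemma reduced_pivots_insert: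
  fixes v :: "nat \<Rightarrow> 'k::field"
  assumes piv: "reduced_pivots d b p" and pn: "\<forall>c<d. p c < n"
    and Vn: "insert v (b ` {..<d}) \<subseteq> Vn n"
  obtains d' b' p' where "reduced_pivots d' b' p'" "\<forall>c<d'. p' c < n"
    "fs.span (b' ` {..<d'}) = fs.span (insert v (b ` {..<d}))"
proof -
  define w where "w = (\<Sum>c<d. fscale (v (p c)) (b c))"
  have w: "w \<in> fs.span (b ` {..<d})"
    unfolding w_def by (intro fs.span_sum fs.span_scale fs.span_base) auto
  show ?thesis
  proof (cases "v - w = 0")
    case True
    then have "fs.span (insert v (b ` {..<d})) = fs.span (b ` {..<d})"
      using w fs.span_redundant by simp
    then show ?thesis using that[OF piv pn] by simp
  next
    case False
    then obtain q where q: "(v - w) q \<noteq> 0" by (auto simp: fun_eq_iff)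
    have "v - w \<in> fs.span (insert v (b ` {..<d}))"
      using w fs.span_mono[of "b ` {..<d}" "insert v (b ` {..<d})"]
      by (intro fs.span_diff) (auto simp: fs.span_base)
    also have "\<dots> \<subseteq> Vn n" using Vn Vn_subspace by (rule fs.span_minimal)
    finally have "q < n" using q by (auto simp: Vn_def not_less[symmetric])
    define u where "u = fscale (inverse ((v - w) q)) (v - w)"
    have u: "u q = 1" "\<forall>c<d. u (p c) = 0"
      using q reduced_pivots_sum_eval[OF piv, of _ "\<lambda>c. v (p c)"]
      by (simp_all add: u_def w_def fscale_def)
    show ?thesis
    proof (rule that[OF reduced_pivots_extend[OF piv u]])
      show "\<forall>c<Suc d. (p(d := q)) c < n" using pn \<open>q < n\<close> by (simp add: less_Suc_eq)
      show "fs.span ((\<lambda>c. if c = d then u else b c - fscale (b c q) u) ` {..<Suc d}) =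
          fs.span (insert v (b ` {..<d}))"
        unfolding span_reduced_pivots_extend[OF piv u] unfolding u_def
        by (rule span_insert_rescale[OF w]) (use q in simp)
    qed
  qed
qed

lemma reduced_pivots_exist:
  fixes X :: "(nat \<Rightarrow> 'k::field) set"
  assumes "finite X" "X \<subseteq> Vn n"
  shows "\<exists>d b p. reduced_pivots d b p \<and> (\<forall>c<d. p c < n) \<and> fs.span (b ` {..<d}) = fs.span X"
  using assms
proof (induction X rule: finite_induct)
  case empty
  show ?case by (rule exI[of _ 0]) (auto simp: reduced_pivots_def)
next
  case (insert v X)
  then obtain d b p where bp: "reduced_pivots d b p" "\<forall>c<d. p c < n" "fs.span (b ` {..<d}) = fs.span X"
    by auto
  have "b ` {..<d} \<subseteq> Vn n"
    using fs.span_superset[of "b ` {..<d}"] fs.span_minimal[OF _ Vn_subspace, of X n] insert.prems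
    unfolding bp(3) by auto
  then obtain d' b' p' where "reduced_pivots d' b' p'" "\<forall>c<d'. p' c < n"
      "fs.span (b' ` {..<d'}) = fs.span (insert v (b ` {..<d}))"
    using reduced_pivots_insert[OF bp(1,2)] insert.prems by (metis insert_subset)
  then show ?case using span_insert_cong[OF bp(3)] by metis
qed

lemma wedge_reduced_pivots_other:
  assumes piv: "reduced_pivots d b p" and pn: "\<forall>c<d. p c < n"
    and T: "T \<subseteq> {..<d}" and T': "T' \<subseteq> {..<d}" and card: "card T' = card T" and "T \<noteq> T'"
  shows "wedge n (map b (sorted_list_of_set T)) (p ` T') = 0"
proof -
  let ?t = "sorted_list_of_set T" and ?s = "sorted_list_of_set (p ` T')"
  have fin: "finite T" "finite T'" using T T' finite_subset by auto
  have "\<not> T \<subseteq> T'" using card_subset_eq[OF fin(2)] card \<open>T \<noteq> T'\<close> by metis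
  then obtain a where a: "a < card T" "?t ! a \<notin> T'"
    by (metis fin(1) in_set_conv_nth length_sorted_list_of_set set_sorted_list_of_set subsetI)
  have "det_leibniz (card T) (\<lambda>a \<beta>. b (?t ! a) (?s ! \<beta>)) = 0"
  proof (rule det_leibniz_zero_row[OF a(1)])
    fix \<beta> assume "\<beta> < card T"
    moreover have "card (p ` T') = card T"
      using card_image[OF inj_on_subset[OF reduced_pivots_inj(1)[OF piv] T']] card by simp
    ultimately have "?s ! \<beta> \<in> p ` T'"
      by (metis fin(2) finite_imageI length_sorted_list_of_set nth_mem set_sorted_list_of_set)
    then obtain c where "c \<in> T'" "?s ! \<beta> = p c" by auto
    moreover have "?t ! a \<in> T"
      using a(1) fin(1) by (metis nth_mem length_sorted_list_of_set set_sorted_list_of_set)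
    ultimately show "b (?t ! a) (?s ! \<beta>) = 0"
      using piv a(2) T T' unfolding reduced_pivots_def by (metis lessThan_iff subsetD)
  qed
  moreover have "det_leibniz (card T) (\<lambda>a \<beta>. (map b ?t ! a) (?s ! \<beta>)) =
      det_leibniz (card T) (\<lambda>a \<beta>. b (?t ! a) (?s ! \<beta>))"
    by (rule det_leibniz_cong) (simp add: fin)
  ultimately show ?thesis unfolding wedge_def by simp
qed

lemma wedge_reduced_pivots_self:
  assumes piv: "reduced_pivots d b p" and pn: "\<forall>c<d. p c < n" and T: "T \<subseteq> {..<d}"
  shows "wedge n (map b (sorted_list_of_set T)) (p ` T) \<noteq> 0"
proof -
  let ?t = "sorted_list_of_set T" and ?s = "sorted_list_of_set (p ` T)"
  have fin: "finite T" using T finite_subset by auto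
  have inj: "inj_on p T" using inj_on_subset[OF reduced_pivots_inj(1)[OF piv] T] .
  have s: "length ?s = card T" "distinct ?s" "set ?s = p ` T"
    using fin card_image[OF inj] by auto
  have t: "length ?t = card T" "set ?t = T" "\<And>a. a < card T \<Longrightarrow> ?t ! a \<in> T"
    using fin by auto (metis nth_mem length_sorted_list_of_set set_sorted_list_of_set)
  have "distinct (map p ?t)" using fin inj by (simp add: distinct_map)
  then have "mset (map p ?t) = mset ?s"
    using set_eq_iff_mset_eq_distinct[OF _ s(2)] s(3) t(2) by (metis list.set_map)
  then obtain \<pi> where \<pi>: "\<pi> permutes {..<card T}" "permute_list \<pi> ?s = map p ?t"
    using s(1) by (metis mset_eq_permutation)
  have entry: "b (?t ! a) (?s ! \<beta>) = (if \<pi> a = \<beta> then 1 else 0)"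
    if a: "a < card T" and \<beta>: "\<beta> < card T" for a \<beta>
  proof -
    have "?s ! \<pi> a = p (?t ! a)"
      using permute_list_nth[OF \<pi>(1)[folded s(1)], of a] \<pi>(2) a t(1) s(1) by simp
    moreover obtain c where c: "c \<in> T" "?s ! \<beta> = p c" using s \<beta> nth_mem by (metis imageE)
    moreover have "?s ! \<pi> a = ?s ! \<beta> \<longleftrightarrow> \<pi> a = \<beta>"
      using nth_eq_iff_index_eq[OF s(2)] s(1) \<beta> permutes_lessThan_lt[OF \<pi>(1) a] by simp
    ultimately show ?thesis
      using piv t(3)[OF a] T inj_onD[OF inj _ t(3)[OF a] c(1)] unfolding reduced_pivots_def
      by (metis lessThan_iff subsetD)
  qed
  have "det_leibniz (card T) (\<lambda>a \<beta>. (map b ?t ! a) (?s ! \<beta>)) =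
      det_leibniz (card T) (\<lambda>a \<beta>. (\<lambda>a' \<beta>. if a' = \<beta> then 1 else 0) (\<pi> a) \<beta>)"
    by (rule det_leibniz_cong) (simp add: entry t(1))
  also have "\<dots> = of_int (sign \<pi>)"
    by (rule det_leibniz_permutation_matrix[OF \<pi>(1)])
  finally show ?thesis
    unfolding wedge_def using s pn T t(1) by (auto simp: of_int_sign_neq_0)
qed

lemma
  fixes j :: nat
  assumes piv: "reduced_pivots d b p" and pn: "\<forall>c<d. p c < n"
  defines "w \<equiv> \<lambda>T. wedge n (map b (sorted_list_of_set T))"
    and "Ts \<equiv> {T. T \<subseteq> {..<d} \<and> card T = j}"
  shows inj_on_sorted_wedges: "inj_on w Ts"
    and independent_sorted_wedges: "fs.independent (w ` Ts)"
proof -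
  have eval: "w T (p ` T') \<noteq> 0 \<longleftrightarrow> T = T'" if "T \<in> Ts" "T' \<in> Ts" for T T'
    using wedge_reduced_pivots_other[OF piv pn, of T T'] wedge_reduced_pivots_self[OF piv pn, of T] that
    unfolding w_def Ts_def by auto
  show inj: "inj_on w Ts"
    by (rule inj_onI) (metis eval)
  show "fs.independent (w ` Ts)"
  proof (rule fs.independent_if_scalars_zero)
    show "finite (w ` Ts)" by (simp add: Ts_def)
    fix f x assume 0: "(\<Sum>x\<in>w ` Ts. fscale (f x) x) = 0" and "x \<in> w ` Ts"
    then obtain T where T: "T \<in> Ts" "x = w T" by auto
    have "0 = (\<Sum>T'\<in>Ts. fscale (f (w T')) (w T')) (p ` T)"
      using 0 sum.reindex[OF inj, of "\<lambda>x. fscale (f x) x"] by simp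
    also have "\<dots> = (\<Sum>T'\<in>Ts. if T' = T then f (w T) * w T (p ` T) else 0)"
      unfolding sum_fun_apply fscale_def using eval T(1) by (intro sum.cong) auto
    also have "\<dots> = f (w T) * w T (p ` T)" using T(1) by (simp add: Ts_def)
    finally show "f x = 0" using eval[OF T(1) T(1)] T(2) by simp
  qed
qed

lemma ext_pow_eq_span_sorted_wedges:
  fixes b :: "nat \<Rightarrow> nat \<Rightarrow> 'k::field"
  assumes span: "fs.span (b ` {..<d}) = fs.span W" and inj: "inj_on b {..<d}"
  shows "ext_pow n j W = fs.span ((\<lambda>T. wedge n (map b (sorted_list_of_set T))) `
           {T. T \<subseteq> {..<d} \<and> card T = j})"
    (is "_ = fs.span (?w ` ?Ts)")
proof
  show "ext_pow n j W \<subseteq> fs.span (?w ` ?Ts)"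
    unfolding ext_pow_def fspan_eq_fs_span
  proof (rule fs.span_minimal[OF _ fs.subspace_span], rule subsetI)
    fix y assume "y \<in> {wedge n vs | vs. length vs = j \<and> set vs \<subseteq> W}"
    then obtain vs where vs: "length vs = j" "set vs \<subseteq> W" and y: "y = wedge n vs" by blast
    then have "set vs \<subseteq> fs.span (b ` {..<d})" using fs.span_superset[of W] unfolding span by blast
    then have "wedge n vs \<in> fs.span {wedge n ws | ws. length ws = length vs \<and> set ws \<subseteq> b ` {..<d}}"
      by (rule wedge_in_span_wedges)
    also have "\<dots> \<subseteq> fs.span (?w ` ?Ts)"
    proof (rule fs.span_minimal[OF _ fs.subspace_span], clarify)
      fix ws :: "(nat \<Rightarrow> 'k) list" assume "length ws = length vs" "set ws \<subseteq> b ` {..<d}"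
      then show "wedge n ws \<in> fs.span (?w ` ?Ts)"
        using wedge_in_span_sorted_wedges[OF inj, of ws n] vs(1) by simp
    qed
    finally show "y \<in> fs.span (?w ` ?Ts)" unfolding y .
  qed
  show "fs.span (?w ` ?Ts) \<subseteq> ext_pow n j W"
    unfolding ext_pow_def fspan_eq_fs_span
  proof (rule fs.span_minimal[OF _ fs.subspace_span], rule subsetI)
    fix y assume "y \<in> ?w ` ?Ts"
    then obtain T where T: "T \<subseteq> {..<d}" "card T = j" and y: "y = ?w T" by blast
    have fin: "finite T" using finite_subset[OF T(1)] by simp
    have "b ` {..<d} \<subseteq> fs.span W" using fs.span_superset[of "b ` {..<d}"] unfolding span .
    then have "set (map b (sorted_list_of_set T)) \<subseteq> fs.span W" using T(1) fin by auto
    then have "?w T \<in> fs.span {wedge n vs | vs.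
        length vs = length (map b (sorted_list_of_set T)) \<and> set vs \<subseteq> W}"
      by (rule wedge_in_span_wedges)
    then show "y \<in> fs.span {wedge n vs | vs. length vs = j \<and> set vs \<subseteq> W}"
      using T(2) fin y by simp
  qed
qed

lemma ext_pow_basis:
  fixes W :: "(nat \<Rightarrow> 'k::field) set"
  assumes "W \<subseteq> Vn n"
  obtains B where "finite B" "fs.independent B" "ext_pow n j W = fs.span B"
    and "card B = fs.dim W choose j"
proof -
  obtain B0 where B0: "B0 \<subseteq> W" "fs.independent B0" "W \<subseteq> fs.span B0"
    by (rule fs.maximal_independent_subset)
  have B0_Vn: "B0 \<subseteq> Vn n" using B0(1) assms by blast
  obtain F :: "(nat \<Rightarrow> 'k) set" where "finite F" "Vn n \<subseteq> fs.span F"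
    using fin_dim_Vn unfolding fin_dim_def by blast
  moreover have "B0 \<subseteq> fs.span F" using B0_Vn \<open>Vn n \<subseteq> fs.span F\<close> by (rule order_trans)
  ultimately have "finite B0" using fs.independent_span_bound[OF _ B0(2)] by simp
  then obtain d b p where bp: "reduced_pivots d b p" "\<forall>c<d. p c < n" "fs.span (b ` {..<d}) = fs.span B0"
    using reduced_pivots_exist[OF _ B0_Vn] by blast
  have "fs.span B0 = fs.span W"
    using B0(1,3) fs.span_superset[of W] unfolding fs.span_eq by blast
  then have span: "fs.span (b ` {..<d}) = fs.span W" using bp(3) by simp
  have inj: "inj_on b {..<d}" by (rule reduced_pivots_inj(2)[OF bp(1)])
  have "fs.dim W = d"
    using fs.dim_span_eq_card_independent[OF reduced_pivots_independent[OF bp(1)]]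
      card_image[OF inj] fs.dim_span[of W] span by simp
  then show ?thesis
    using that[OF _ independent_sorted_wedges[OF bp(1,2)] ext_pow_eq_span_sorted_wedges[OF span inj]]
      card_image[OF inj_on_sorted_wedges[OF bp(1,2)]] n_subsets[of "{..<d}" j]
    by simp
qed

lemma fin_dim_ext_pow: "W \<subseteq> Vn n \<Longrightarrow> fin_dim (ext_pow n j W)"
  unfolding fin_dim_def by (rule ext_pow_basis) auto

lemma dim_ext_pow: "W \<subseteq> Vn n \<Longrightarrow> fs.dim (ext_pow n j W) = fs.dim W choose j"
  by (rule ext_pow_basis[of W n j]) (simp_all add: fs.dim_eq_card_independent)

section \<open>Chains and the Moebius function\<close>

lemma sorted_wrt_psubset_distinct: "sorted_wrt (\<subset>) xs \<Longrightarrow> distinct xs"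
  by (induction xs) auto

lemma finite_chains: "finite P \<Longrightarrow> finite (chains P m)"
  unfolding chains_def
  by (rule finite_subset[OF _ finite_lists_length_eq[of P "Suc m"]]) auto

lemma chains_empty:
  assumes "finite P" "card P \<le> m"
  shows "chains P m = {}"
proof -
  have "card (set \<sigma>) = Suc m" "card (set \<sigma>) \<le> card P" if "\<sigma> \<in> chains P m" for \<sigma>
  proof -
    from that have "length \<sigma> = Suc m" "set \<sigma> \<subseteq> P" "sorted_wrt (\<subset>) \<sigma>"
      unfolding chains_def by auto
    then show "card (set \<sigma>) = Suc m" "card (set \<sigma>) \<le> card P"
      using distinct_card[OF sorted_wrt_psubset_distinct[of \<sigma>]] card_mono[OF assms(1), of "set \<sigma>"]
      by auto
  qed
  then show ?thesis using assms(2) by fastforce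
qed

lemma hd_chains: "\<sigma> \<in> chains P m \<Longrightarrow> hd \<sigma> \<in> P"
  unfolding chains_def by (cases \<sigma>) auto

definition chains_from :: "'a set set \<Rightarrow> nat \<Rightarrow> 'a set \<Rightarrow> 'a set list set" where
  "chains_from P m y = {\<sigma> \<in> chains P m. hd \<sigma> = y}"

definition alt_chain_count :: "'a set set \<Rightarrow> 'a set \<Rightarrow> int" where
  "alt_chain_count P y = (\<Sum>m\<le>card P. (-1) ^ m * int (card (chains_from P m y)))"

lemma chains_from_0: "y \<in> P \<Longrightarrow> chains_from P 0 y = {[y]}"
  unfolding chains_from_def chains_def by (auto simp: length_Suc_conv)

lemma chains_from_Suc:
  assumes "y \<in> P"
  shows "chains_from P (Suc m) y = (\<lambda>\<tau>. y # \<tau>) ` (\<Union>z\<in>{z \<in> P. y \<subset> z}. chains_from P m z)"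
proof (intro equalityI subsetI)
  fix \<sigma> assume \<sigma>: "\<sigma> \<in> chains_from P (Suc m) y"
  then have "length \<sigma> = Suc (Suc m)" "hd \<sigma> = y" unfolding chains_from_def chains_def by auto
  then obtain z \<tau> where eq: "\<sigma> = y # z # \<tau>" by (auto simp: length_Suc_conv)
  with \<sigma> show "\<sigma> \<in> (\<lambda>\<tau>. y # \<tau>) ` (\<Union>z\<in>{z \<in> P. y \<subset> z}. chains_from P m z)"
    unfolding chains_from_def chains_def by (intro image_eqI[of _ _ "z # \<tau>"] UN_I[of z]) auto
next
  fix \<sigma> assume "\<sigma> \<in> (\<lambda>\<tau>. y # \<tau>) ` (\<Union>z\<in>{z \<in> P. y \<subset> z}. chains_from P m z)"
  then obtain z \<tau>' where "y \<subset> z" "\<tau>' \<in> chains P m" "hd \<tau>' = z" "\<sigma> = y # \<tau>'"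
    unfolding chains_from_def by blast
  moreover obtain \<tau> where "\<tau>' = z # \<tau>"
    using \<open>\<tau>' \<in> chains P m\<close> \<open>hd \<tau>' = z\<close> unfolding chains_def by (cases \<tau>') auto
  ultimately have \<sigma>: "\<sigma> = y # z # \<tau>" "y \<subset> z" "z # \<tau> \<in> chains P m" by auto
  then have "\<forall>x \<in> set (z # \<tau>). y \<subset> x" unfolding chains_def by auto
  with \<sigma> assms show "\<sigma> \<in> chains_from P (Suc m) y" unfolding chains_from_def chains_def by auto
qed

lemma card_chains_from_Suc:
  assumes "finite P" "y \<in> P"
  shows "card (chains_from P (Suc m) y) = (\<Sum>z\<in>{z \<in> P. y \<subset> z}. card (chains_from P m z))"
  unfolding chains_from_Suc[OF assms(2)]
  using assms(1) finite_chains[OF assms(1)]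
  by (subst card_image) (auto simp: chains_from_def intro!: card_UN_disjoint)

lemma card_chains_from_0: "y \<in> P \<Longrightarrow> card (chains_from P 0 y) = 1"
  by (simp add: chains_from_0)

text \<open>Counting the chains that start at y with alternating signs solves the defining recursion
  of the Moebius function; this is Philip Hall's theorem.\<close>
lemma alt_chain_count_rec:
  assumes fin: "finite P" and y: "y \<in> P"
  shows "alt_chain_count P y = 1 - (\<Sum>z\<in>{z \<in> P. y \<subset> z}. alt_chain_count P z)"
proof -
  obtain N where N: "card P = Suc N" using y fin by (cases "card P") auto
  have "chains_from P (Suc N) z = {}" for z
    using chains_empty[OF fin, of "Suc N"] N by (simp add: chains_from_def)
  then have alt: "alt_chain_count P z = (\<Sum>m\<le>N. (-1) ^ m * int (card (chains_from P m z)))" for z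
    unfolding alt_chain_count_def N by simp
  have "alt_chain_count P y =
      int (card (chains_from P 0 y)) + (\<Sum>m\<le>N. (-1) ^ Suc m * int (card (chains_from P (Suc m) y)))"
    unfolding alt_chain_count_def N by (subst sum.atMost_Suc_shift) simp
  also have "\<dots> = 1 - (\<Sum>m\<le>N. (-1) ^ m * (\<Sum>z\<in>{z \<in> P. y \<subset> z}. int (card (chains_from P m z))))"
    by (simp add: card_chains_from_0[OF y] card_chains_from_Suc[OF fin y] sum_negf)
  also have "\<dots> = 1 - (\<Sum>z\<in>{z \<in> P. y \<subset> z}. alt_chain_count P z)"
    by (simp add: alt sum_distrib_left sum.swap[of _ "{..N}"])
  finally show ?thesis .
qed

lemma mobius_eqI:
  assumes fin: "finite L"
    and h: "\<And>y. h y = (if y \<in> L \<and> lat_le V y then (if y = V then 1 else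
              - (\<Sum>z\<in>{z \<in> L. lat_le V z \<and> lat_le z y \<and> z \<noteq> y}. h z)) else 0)"
  shows "mobius L lat_le V = h"
  unfolding mobius_def
proof (rule the_equality)
  show "\<forall>y. h y = (if y \<in> L \<and> lat_le V y then (if y = V then 1 else
          - (\<Sum>z\<in>{z \<in> L. lat_le V z \<and> lat_le z y \<and> z \<noteq> y}. h z)) else 0)"
    using h by blast
  fix f :: "'a set \<Rightarrow> int"
  assume f: "\<forall>y. f y = (if y \<in> L \<and> lat_le V y then (if y = V then 1 else
          - (\<Sum>z\<in>{z \<in> L. lat_le V z \<and> lat_le z y \<and> z \<noteq> y}. f z)) else 0)"
  show "f = h"
  proof
    fix y
    show "f y = h y"
    proof (induction y rule: measure_induct_rule[of "\<lambda>y. card {z \<in> L. y \<subset> z}"])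
      case (less y)
      have "f z = h z" if z: "z \<in> {z \<in> L. lat_le V z \<and> lat_le z y \<and> z \<noteq> y}" for z
      proof (rule less)
        have "{w \<in> L. z \<subset> w} \<subset> {w \<in> L. y \<subset> w}" using z by (auto simp: lat_le_def)
        then show "card {w \<in> L. z \<subset> w} < card {w \<in> L. y \<subset> w}"
          using fin by (simp add: psubset_card_mono)
      qed
      then have "(\<Sum>z\<in>{z \<in> L. lat_le V z \<and> lat_le z y \<and> z \<noteq> y}. f z) =
          (\<Sum>z\<in>{z \<in> L. lat_le V z \<and> lat_le z y \<and> z \<noteq> y}. h z)"
        by (rule sum.cong[OF refl])
      then show ?case by (subst f[rule_format], subst h) simp
    qed
  qed
qed

lemma mobius_lat_le_eq_alt_chain_count:
  assumes fin: "finite L" and V: "V \<in> L" and sub: "\<forall>x\<in>L. x \<subseteq> V"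
  shows "mobius L lat_le V y =
    (if y \<in> L then (if y = V then 1 else - alt_chain_count (L - {V}) y) else 0)"
proof -
  define h where
    "h y = (if y \<in> L then (if y = V then 1 else - alt_chain_count (L - {V}) y) else 0)" for y
  have "h y = (if y \<in> L \<and> lat_le V y then (if y = V then 1 else
          - (\<Sum>z\<in>{z \<in> L. lat_le V z \<and> lat_le z y \<and> z \<noteq> y}. h z)) else 0)" for y
  proof (cases "y \<in> L \<and> y \<noteq> V")
    case False
    then show ?thesis using sub by (auto simp: h_def lat_le_def)
  next
    case True
    have "{z \<in> L. lat_le V z \<and> lat_le z y \<and> z \<noteq> y} = insert V {z \<in> L - {V}. y \<subset> z}"
      using sub True V by (auto simp: lat_le_def)
    then have "(\<Sum>z\<in>{z \<in> L. lat_le V z \<and> lat_le z y \<and> z \<noteq> y}. h z) =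
        1 - (\<Sum>z\<in>{z \<in> L - {V}. y \<subset> z}. alt_chain_count (L - {V}) z)"
      using fin by (simp add: h_def V sum_negf)
    also have "\<dots> = alt_chain_count (L - {V}) y"
      using alt_chain_count_rec[of "L - {V}" y] fin True by simp
    finally show ?thesis using True sub by (simp add: h_def lat_le_def)
  qed
  then show ?thesis using mobius_eqI[OF fin, of h V] by (simp add: h_def)
qed

section \<open>The Euler characteristic of the sheaf homology\<close>

lemma chain_sp_eq_direct_sum: "chain_sp n j P m = direct_sum (chains P m) (\<lambda>\<sigma>. ext_pow n j (hd \<sigma>))"
  unfolding chain_sp_def direct_sum_def ..

lemma
  assumes "finite P" "\<forall>x\<in>P. x \<subseteq> Vn n"
  shows subspace_chain_sp: "fs.subspace (chain_sp n j P m)"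
    and fin_dim_chain_sp: "fin_dim (chain_sp n j P m)"
    and dim_chain_sp: "fs.dim (chain_sp n j P m) = (\<Sum>\<sigma>\<in>chains P m. fs.dim (hd \<sigma>) choose j)"
proof -
  have hd: "hd \<sigma> \<subseteq> Vn n" if "\<sigma> \<in> chains P m" for \<sigma> using assms(2) hd_chains[OF that] by blast
  have sub: "\<And>\<sigma>. \<sigma> \<in> chains P m \<Longrightarrow> fs.subspace (ext_pow n j (hd \<sigma>))"
    by (simp add: ext_pow_def fspan_eq_fs_span)
  show "fs.subspace (chain_sp n j P m)"
    unfolding chain_sp_eq_direct_sum by (rule direct_sum_subspace[OF sub])
  show "fin_dim (chain_sp n j P m)"
    unfolding chain_sp_eq_direct_sum
    using finite_chains[OF assms(1)] by (rule fin_dim_direct_sum) (rule fin_dim_ext_pow[OF hd])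
  show "fs.dim (chain_sp n j P m) = (\<Sum>\<sigma>\<in>chains P m. fs.dim (hd \<sigma>) choose j)"
    unfolding chain_sp_eq_direct_sum
    using dim_direct_sum[OF finite_chains[OF assms(1)] sub fin_dim_ext_pow[OF hd]] dim_ext_pow[OF hd]
    by simp
qed

lemma bdry_apply:
  "bdry P m f (\<tau>, S) =
     (\<Sum>\<sigma>\<in>chains P m. \<Sum>i\<le>m. (if del_nth i \<sigma> = \<tau> then (-1) ^ i else 0) * f (\<sigma>, S))"
  unfolding bdry_def by (auto intro!: sum.cong)

lemma linear_bdry: "Vector_Spaces.linear fscale fscale (bdry P m :: _ \<Rightarrow> _ \<Rightarrow> 'k::field)"
proof (rule linear_fscaleI; rule ext; clarify)
  fix x y :: "_ \<Rightarrow> 'k" and \<tau> S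
  show "bdry P m (x + y) (\<tau>, S) = (bdry P m x + bdry P m y) (\<tau>, S)"
    by (simp add: bdry_apply distrib_left sum.distrib)
next
  fix c and x :: "_ \<Rightarrow> 'k" and \<tau> S
  show "bdry P m (fscale c x) (\<tau>, S) = fscale c (bdry P m x) (\<tau>, S)"
    by (simp add: bdry_apply fscale_def sum_distrib_left mult.left_commute)
qed

lemma alternating_sum_telescope:
  fixes s z b :: "nat \<Rightarrow> int"
  assumes "\<And>m. s (Suc m) = z (Suc m) + b m" and "s 0 = z 0"
  shows "(\<Sum>m\<le>N. (-1) ^ m * (z m - b m)) = (\<Sum>m\<le>N. (-1) ^ m * s m) - (-1) ^ N * b N"
  using assms by (induction N) (simp_all add: algebra_simps)

lemma hs_euler_eq_alternating_dim:
  assumes fin: "finite P" and sub: "\<forall>x\<in>P. x \<subseteq> Vn n"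
  shows "hs_euler n j P = (\<Sum>m\<le>card P. (-1) ^ m * int (fs.dim (chain_sp n j P m)))"
proof -
  define s where "s m = int (fs.dim (chain_sp n j P m))" for m
  define z where "z m = int (fs.dim (cycles n j P m))" for m
  define b where "b m = int (fs.dim (boundaries n j P m))" for m
  have "s (Suc m) = z (Suc m) + b m" for m
    using rank_nullity[OF linear_bdry[of P "Suc m"] subspace_chain_sp[OF assms, of j "Suc m"]
        fin_dim_chain_sp[OF assms, of j "Suc m"]]
    unfolding s_def z_def b_def cycles_def boundaries_def by simp
  moreover have "s 0 = z 0" unfolding s_def z_def cycles_def by simp
  moreover have "b (card P) = 0"
  proof -
    have "chain_sp n j P (Suc (card P)) = {0}"
      using chains_empty[OF fin, of "Suc (card P)"] by (auto simp: chain_sp_def fun_eq_iff)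
    moreover have "bdry P (Suc (card P)) 0 = 0" by (simp add: bdry_apply fun_eq_iff)
    ultimately have "boundaries n j P (card P) = {0}" unfolding boundaries_def by simp
    then show ?thesis unfolding b_def using fs_dim_zero by simp
  qed
  ultimately show ?thesis
    using alternating_sum_telescope[of s z b "card P"]
    unfolding hs_euler_def hs_dim_def z_def b_def s_def fdim_eq_fs_dim by simp
qed

lemma alternating_sum_chains:
  fixes g :: "'a set \<Rightarrow> int"
  assumes "finite P"
  shows "(\<Sum>m\<le>card P. (-1) ^ m * (\<Sum>\<sigma>\<in>chains P m. g (hd \<sigma>))) = (\<Sum>y\<in>P. g y * alt_chain_count P y)"
proof -
  have "(\<Sum>\<sigma>\<in>chains P m. g (hd \<sigma>)) = (\<Sum>y\<in>P. g y * int (card (chains_from P m y)))" for m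
  proof -
    have "(\<Sum>\<sigma>\<in>chains P m. g (hd \<sigma>)) = (\<Sum>y\<in>P. \<Sum>\<sigma>\<in>chains_from P m y. g (hd \<sigma>))"
      unfolding chains_from_def
      by (rule sum.group[symmetric]) (use assms finite_chains[OF assms] hd_chains in auto)
    then show ?thesis by (simp add: chains_from_def mult.commute)
  qed
  then show ?thesis
    unfolding alt_chain_count_def
    by (simp add: sum_distrib_left sum.swap[of _ "{..card P}"] mult_ac)
qed

lemma hs_euler_eq_sum_alt_chain_count:
  assumes "finite P" "\<forall>x\<in>P. x \<subseteq> Vn n"
  shows "hs_euler n j P = (\<Sum>y\<in>P. int (fdim y choose j) * alt_chain_count P y)"
  using alternating_sum_chains[OF assms(1), of "\<lambda>y. int (fdim y choose j)"]
  by (simp add: hs_euler_eq_alternating_dim[OF assms] dim_chain_sp[OF assms] fdim_eq_fs_dim)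

lemma finite_int_lattice: "finite A \<Longrightarrow> finite (int_lattice n A)"
  unfolding int_lattice_def by (rule finite_surj[of "Pow A" _ "\<lambda>B. Vn n \<inter> \<Inter>B"]) auto

lemma Vn_in_int_lattice: "Vn n \<in> int_lattice n A"
  unfolding int_lattice_def by auto

lemma int_lattice_subset_Vn: "x \<in> int_lattice n A \<Longrightarrow> x \<subseteq> Vn n"
  unfolding int_lattice_def by auto

lemma coeff_one_plus_X_power:
  "coeff ([:1, 1:] ^ d) j = (of_nat (d choose j) :: 'a::comm_semiring_1)"
proof (cases "j \<le> d")
  case True
  then show ?thesis using coeff_linear_poly_power[OF True, of 1 1] by simp
next
  case False
  then show ?thesis
    using degree_power_le[of "[:1, 1:] :: 'a poly" d] by (simp add: coeff_eq_0 binomial_eq_0)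
qed

lemma pcompose_monom_1: "pcompose (monom 1 d) q = q ^ d" for q :: "'a::comm_semiring_1 poly"
  by (induction d) (simp_all add: monom_Suc pcompose_pCons pcompose_1)

lemma coeff_char_poly_pcompose:
  fixes A :: "(nat \<Rightarrow> 'k::field) set set"
  assumes "finite A"
  shows "coeff (pcompose (char_poly n A) [:1, 1:]) j =
    int (fdim (Vn n :: (nat \<Rightarrow> 'k) set) choose j) -
    (\<Sum>y\<in>int_lattice n A - {Vn n}.
       int (fdim y choose j) * alt_chain_count (int_lattice n A - {Vn n}) y)"
proof -
  let ?L = "int_lattice n A" and ?V = "Vn n :: (nat \<Rightarrow> 'k) set"
  let ?C = "\<lambda>x. int (fdim x choose j)" and ?alt = "alt_chain_count (?L - {?V})"
  have fin: "finite ?L" by (rule finite_int_lattice[OF assms])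
  have mobius:
    "mobius ?L lat_le ?V x = (if x \<in> ?L then (if x = ?V then 1 else - ?alt x) else 0)" for x
    using mobius_lat_le_eq_alt_chain_count[OF fin Vn_in_int_lattice] int_lattice_subset_Vn by blast
  have "coeff (pcompose (char_poly n A) [:1, 1:]) j = (\<Sum>x\<in>?L. mobius ?L lat_le ?V x * ?C x)"
    unfolding char_poly_def pcompose_sum coeff_sum pcompose_smult pcompose_monom_1
    by (simp add: coeff_one_plus_X_power)
  also have "\<dots> = mobius ?L lat_le ?V ?V * ?C ?V + (\<Sum>x\<in>?L - {?V}. mobius ?L lat_le ?V x * ?C x)"
    by (rule sum.remove[OF fin Vn_in_int_lattice])
  also have "(\<Sum>x\<in>?L - {?V}. mobius ?L lat_le ?V x * ?C x) = - (\<Sum>x\<in>?L - {?V}. ?C x * ?alt x)"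
    unfolding sum_negf[symmetric] by (rule sum.cong) (auto simp: mobius)
  finally show ?thesis using mobius[of ?V] by (simp add: Vn_in_int_lattice)
qed

theorem corollary5:
  fixes n :: nat and A :: "(nat \<Rightarrow> 'k::field) set set"
  assumes "finite A"
    and "\<forall>H\<in>A. is_lin_hyperplane n H"
  shows "\<forall>j. hs_euler n j (int_lattice n A - {Vn n}) =
      coeff (- pcompose (char_poly n A) [:1, 1:] + [:1, 1:] ^ fdim (Vn n :: (nat \<Rightarrow> 'k) set)) j"
proof
  fix j
  have "hs_euler n j (int_lattice n A - {Vn n}) =
      (\<Sum>y\<in>int_lattice n A - {Vn n}.
         int (fdim y choose j) * alt_chain_count (int_lattice n A - {Vn n}) y)"
    using finite_int_lattice[OF assms(1)]
    by (intro hs_euler_eq_sum_alt_chain_count) (auto dest: int_lattice_subset_Vn)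
  then show "hs_euler n j (int_lattice n A - {Vn n}) =
      coeff (- pcompose (char_poly n A) [:1, 1:] + [:1, 1:] ^ fdim (Vn n :: (nat \<Rightarrow> 'k) set)) j"
    by (simp add: coeff_char_poly_pcompose[OF assms(1)] coeff_one_plus_X_power)
qed

end
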